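(* For every instance (strip $T=[0,w]\times[0,h]$ with $1<w\le 2$, $h>1$, and reals $\frac12\le y_1<\dots<y_n\le h-\frac12$), there is a staircase layout with positive gap.
   Context: A layout is a pair $(\mathbf x,\prec)$ where $\mathbf x=(x_1,\dots,x_n)$ with $x_i\in[\frac12,w-\frac12]$, and $\prec$ is a total order (stacking order) on the squares $s_1,\dots,s_n$, where $s_i$ is the closed axis-parallel unit square with centre $(x_i,y_i)$. If $s_i\prec s_j$ we say $s_j$ is in front of $s_i$ and $s_i$ is behind $s_j$. A point $p$ on the boundary of $s_i$ is visible if every square $s_j$ ($j\neq i$) containing $p$ is behind $s_i$. The visible perimeter of $s_i$ is the total length of its visible boundary points; the gap of $s_i$ is its visible perimeter minus $2$, and the gap of a layout is the minimum of the gaps of its squares. A staircase is a layout in which $x_1\le x_2\le\dots\le x_n$ or $x_1\ge x_2\ge\dots\ge x_n$, and in which $s_1\prec s_2\prec\dots\prec s_n$ or $s_1\succ s_2\succ\dots\succ s_n$. *)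

theory Defs
  imports "HOL-Analysis.Analysis"
begin

text \<open>Squares are indexed by 1..n. x, y :: nat => real give the centres.
  A stacking order is a strict relation prec on indices: prec i j means s_i is behind s_j.\<close>

definition unit_sq :: "real \<Rightarrow> real \<Rightarrow> (real \<times> real) set" where
  "unit_sq a b = {p. \<bar>fst p - a\<bar> \<le> 1/2 \<and> \<bar>snd p - b\<bar> \<le> 1/2}"

definition is_stacking_order :: "nat \<Rightarrow> (nat \<Rightarrow> nat \<Rightarrow> bool) \<Rightarrow> bool" where
  "is_stacking_order n prec \<longleftrightarrow>
     (\<forall>i\<in>{1..n}. \<not> prec i i) \<and>
     (\<forall>i\<in>{1..n}. \<forall>j\<in>{1..n}. \<forall>k\<in>{1..n}. prec i j \<longrightarrow> prec j k \<longrightarrow> prec i k) \<and>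
     (\<forall>i\<in>{1..n}. \<forall>j\<in>{1..n}. i \<noteq> j \<longrightarrow> prec i j \<or> prec j i)"

definition is_layout :: "real \<Rightarrow> nat \<Rightarrow> (nat \<Rightarrow> real) \<Rightarrow> (nat \<Rightarrow> nat \<Rightarrow> bool) \<Rightarrow> bool" where
  "is_layout w n x prec \<longleftrightarrow>
     (\<forall>i\<in>{1..n}. 1/2 \<le> x i \<and> x i \<le> w - 1/2) \<and> is_stacking_order n prec"

definition visible_pt ::
  "nat \<Rightarrow> (nat \<Rightarrow> real) \<Rightarrow> (nat \<Rightarrow> real) \<Rightarrow> (nat \<Rightarrow> nat \<Rightarrow> bool) \<Rightarrow> nat \<Rightarrow> real \<times> real \<Rightarrow> bool" where
  "visible_pt n x y prec i p \<longleftrightarrow>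
     (\<forall>j\<in>{1..n}. j \<noteq> i \<and> p \<in> unit_sq (x j) (y j) \<longrightarrow> prec j i)"

definition sides :: "real \<Rightarrow> real \<Rightarrow> (real \<Rightarrow> real \<times> real) list" where
  "sides a b = [ (\<lambda>t. (a - 1/2 + t, b - 1/2)), (\<lambda>t. (a - 1/2 + t, b + 1/2)),
                 (\<lambda>t. (a - 1/2, b - 1/2 + t)), (\<lambda>t. (a + 1/2, b - 1/2 + t)) ]"

definition visible_perimeter ::
  "nat \<Rightarrow> (nat \<Rightarrow> real) \<Rightarrow> (nat \<Rightarrow> real) \<Rightarrow> (nat \<Rightarrow> nat \<Rightarrow> bool) \<Rightarrow> nat \<Rightarrow> real" where
  "visible_perimeter n x y prec i =
     (\<Sum>\<gamma>\<leftarrow>sides (x i) (y i). measure lebesgue {t\<in>{0..1}. visible_pt n x y prec i (\<gamma> t)})"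

definition sq_gap ::
  "nat \<Rightarrow> (nat \<Rightarrow> real) \<Rightarrow> (nat \<Rightarrow> real) \<Rightarrow> (nat \<Rightarrow> nat \<Rightarrow> bool) \<Rightarrow> nat \<Rightarrow> real" where
  "sq_gap n x y prec i = visible_perimeter n x y prec i - 2"

definition layout_gap ::
  "nat \<Rightarrow> (nat \<Rightarrow> real) \<Rightarrow> (nat \<Rightarrow> real) \<Rightarrow> (nat \<Rightarrow> nat \<Rightarrow> bool) \<Rightarrow> real" where
  "layout_gap n x y prec = Min (sq_gap n x y prec ` {1..n})"

definition staircase :: "nat \<Rightarrow> (nat \<Rightarrow> real) \<Rightarrow> (nat \<Rightarrow> nat \<Rightarrow> bool) \<Rightarrow> bool" where
  "staircase n x prec \<longleftrightarrow>
     ((\<forall>i\<in>{1..n}. \<forall>j\<in>{1..n}. i \<le> j \<longrightarrow> x i \<le> x j) \<or>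
      (\<forall>i\<in>{1..n}. \<forall>j\<in>{1..n}. i \<le> j \<longrightarrow> x i \<ge> x j)) \<and>
     ((\<forall>i\<in>{1..n}. \<forall>j\<in>{1..n}. prec i j \<longleftrightarrow> i < j) \<or>
      (\<forall>i\<in>{1..n}. \<forall>j\<in>{1..n}. prec i j \<longleftrightarrow> j < i))"

end

theory Submission
  imports Defs
begin

text \<open>Put the squares at evenly spaced positions x_i = 1/2 + (i - 1)(w - 1)/n and stack each one
  in front of all its predecessors. Every square in front of s_i is then strictly higher and at
  least \<delta> = (w - 1)/n further to the right, so the whole bottom side, the whole left side and an
  initial piece of length \<delta>/2 of the top side of s_i stay visible: the gap is at least \<delta>/2.\<close>

lemma unit_sq_eq_cbox: "unit_sq a b = cbox (a - 1/2, b - 1/2) (a + 1/2, b + 1/2)"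
  by (auto simp: unit_sq_def cbox_Pair_eq abs_if split: if_splits)

lemma sets_lebesgue_visible_side:
  fixes \<gamma> :: "real \<Rightarrow> real \<times> real"
  assumes "\<gamma> \<in> borel_measurable borel"
  shows "{t\<in>{0..1}. visible_pt n x y prec i (\<gamma> t)} \<in> sets lebesgue"
proof -
  have preimage_sq: "\<gamma> -` unit_sq a b \<in> sets borel" for a b
    using measurable_sets_borel[OF assms, of "unit_sq a b"] by (simp add: unit_sq_eq_cbox)
  have "{t\<in>{0..1}. visible_pt n x y prec i (\<gamma> t)}
      = {0..1} - (\<Union>j\<in>{j\<in>{1..n}. j \<noteq> i \<and> \<not> prec j i}. \<gamma> -` unit_sq (x j) (y j))"
    by (auto simp: visible_pt_def)
  also have "\<dots> \<in> sets borel"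
    using preimage_sq by (intro sets.Diff sets.finite_UN) auto
  finally show ?thesis
    by (simp add: sets_completionI_sets)
qed

lemma measure_lebesgue_ge_if_interval_subset:
  fixes S :: "real set"
  assumes "{0..c} \<subseteq> S" "S \<subseteq> {0..1}" "S \<in> sets lebesgue"
  shows "c \<le> measure lebesgue S"
proof (cases "c \<le> 0")
  case True
  then show ?thesis by (meson measure_nonneg order_trans)
next
  case False
  have "S \<in> fmeasurable lebesgue"
    by (rule fmeasurableI2[of "{0..1}"]) (use assms in auto)
  then have "measure lebesgue {0..c} \<le> measure lebesgue S"
    using assms by (intro measure_mono_fmeasurable) auto
  then show ?thesis
    using False by simp
qed

lemma measure_visible_side_ge:
  fixes \<gamma> :: "real \<Rightarrow> real \<times> real"
  assumes "\<gamma> \<in> borel_measurable borel" "c \<le> 1"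
    and "\<And>t. 0 \<le> t \<Longrightarrow> t \<le> c \<Longrightarrow> visible_pt n x y prec i (\<gamma> t)"
  shows "c \<le> measure lebesgue {t\<in>{0..1}. visible_pt n x y prec i (\<gamma> t)}"
  using assms sets_lebesgue_visible_side
  by (intro measure_lebesgue_ge_if_interval_subset) auto

lemma visible_pt_lessI:
  assumes "\<And>j. j \<in> {1..n} \<Longrightarrow> i < j \<Longrightarrow> fst p < x j - 1/2 \<or> snd p < y j - 1/2"
  shows "visible_pt n x y (<) i p"
  unfolding visible_pt_def
proof (intro ballI impI)
  fix j assume j: "j \<in> {1..n}" "j \<noteq> i \<and> p \<in> unit_sq (x j) (y j)"
  then have "\<not> (fst p < x j - 1/2 \<or> snd p < y j - 1/2)"
    unfolding unit_sq_def by (auto simp: abs_if split: if_splits)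
  then show "j < i"
    using assms[of j] j by (meson linorder_neqE_nat)
qed

lemma sq_gap_ge_if_front_squares_right_above:
  assumes "0 < \<delta>" "\<delta> \<le> 2"
    and right: "\<And>j. j \<in> {1..n} \<Longrightarrow> i < j \<Longrightarrow> x i + \<delta> \<le> x j"
    and above: "\<And>j. j \<in> {1..n} \<Longrightarrow> i < j \<Longrightarrow> y i < y j"
  shows "\<delta>/2 \<le> sq_gap n x y (<) i"
proof -
  let ?m = "\<lambda>\<gamma>. measure lebesgue {t\<in>{0..1}. visible_pt n x y (<) i (\<gamma> t)}"
  have bottom: "1 \<le> ?m (\<lambda>t. (x i - 1/2 + t, y i - 1/2))"
    by (intro measure_visible_side_ge visible_pt_lessI) (simp_all add: above)
  have left: "1 \<le> ?m (\<lambda>t. (x i - 1/2, y i - 1/2 + t))"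
  proof (intro measure_visible_side_ge visible_pt_lessI)
    fix j assume "j \<in> {1..n}" "i < j"
    then show "fst (x i - 1/2, y i - 1/2 + t) < x j - 1/2 \<or> snd (x i - 1/2, y i - 1/2 + t) < y j - 1/2"
      for t using right[of j] \<open>0 < \<delta>\<close> by simp
  qed simp_all
  have top: "\<delta>/2 \<le> ?m (\<lambda>t. (x i - 1/2 + t, y i + 1/2))"
  proof (intro measure_visible_side_ge visible_pt_lessI)
    fix j t assume "j \<in> {1..n}" "i < j" "t \<le> \<delta>/2"
    then show "fst (x i - 1/2 + t, y i + 1/2) < x j - 1/2 \<or> snd (x i - 1/2 + t, y i + 1/2) < y j - 1/2"
      using right[of j] \<open>0 < \<delta>\<close> by simp
  qed (use \<open>\<delta> \<le> 2\<close> in simp_all)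
  have right_side: "0 \<le> ?m (\<lambda>t. (x i + 1/2, y i - 1/2 + t))"
    by simp
  have "visible_perimeter n x y (<) i = ?m (\<lambda>t. (x i - 1/2 + t, y i - 1/2))
      + ?m (\<lambda>t. (x i - 1/2 + t, y i + 1/2)) + ?m (\<lambda>t. (x i - 1/2, y i - 1/2 + t))
      + ?m (\<lambda>t. (x i + 1/2, y i - 1/2 + t))"
    by (simp add: visible_perimeter_def sides_def)
  then show ?thesis
    using bottom left top right_side unfolding sq_gap_def by linarith
qed

lemma is_stacking_order_less: "is_stacking_order n (<)"
  by (auto simp: is_stacking_order_def)

theorem lemma1:
  fixes w h :: real and n :: nat and y :: "nat \<Rightarrow> real"
  assumes "1 < w" and "w \<le> 2" and "1 < h" and "1 \<le> n"
    and "\<forall>i\<in>{1..n}. 1/2 \<le> y i \<and> y i \<le> h - 1/2"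
    and "\<forall>i\<in>{1..<n}. y i < y (Suc i)"
  shows "\<exists>x prec. is_layout w n x prec \<and> staircase n x prec \<and> layout_gap n x y prec > 0"
proof -
  define \<delta> where "\<delta> = (w - 1) / n"
  define x where "x i = 1/2 + \<delta> * real (i - 1)" for i
  have \<delta>: "0 < \<delta>" "\<delta> \<le> 2" "\<delta> * n = w - 1"
    using assms(1,2,4) by (auto simp: \<delta>_def field_simps)
  have x_step: "x i + \<delta> \<le> x j" if "1 \<le> i" "i < j" for i j
  proof -
    have "\<delta> * 1 \<le> \<delta> * (real (j - 1) - real (i - 1))"
      using that \<delta>(1) by (intro mult_left_mono) auto
    then show ?thesis
      by (simp add: x_def algebra_simps)
  qed
  have x_mono: "x i \<le> x j" if "i \<le> j" for i j
    using that \<delta>(1) by (simp add: x_def)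
  have x_range: "1/2 \<le> x i \<and> x i \<le> w - 1/2" if "i \<in> {1..n}" for i
  proof -
    have "\<delta> * real (i - 1) \<le> \<delta> * n"
      using that \<delta>(1) by (intro mult_left_mono) auto
    then show ?thesis
      using \<delta> by (simp add: x_def)
  qed
  have y_step: "y i < y j" if "i \<in> {1..n}" "j \<in> {1..n}" "i < j" for i j
  proof (rule lift_Suc_mono_less_ivl[where N = "{1..<n}"])
    show "y k < y (Suc k)" if "k \<in> {1..<n}" for k
      using assms(6) that by blast
  qed (use that in auto)
  have "is_layout w n x (<)"
    using x_range is_stacking_order_less by (simp add: is_layout_def)
  moreover have "staircase n x (<)"
    using x_mono by (simp add: staircase_def)
  moreover have "0 < sq_gap n x y (<) i" if "i \<in> {1..n}" for i
    using sq_gap_ge_if_front_squares_right_above[of \<delta> n i x y] that \<delta> x_step y_step by auto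
  then have "0 < layout_gap n x y (<)"
    using assms(4) by (simp add: layout_gap_def Min_gr_iff)
  ultimately show ?thesis
    by blast
qed

end
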